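(* The collection $\{\mathcal H_X^*\}_{X\in Ob(\mathscr C)}$ is a set of projective generators for ${^\mathscr C}Ctr$.
   Context: $K$ is a field; $(U',U):=Hom_K(U',U)$. A coalgebra $\mathscr C$ with several objects has a set $Ob(\mathscr C)$, vector spaces $\mathscr C(X,Y)$, and coassociative, counital maps $\delta_{XYZ}:\mathscr C(X,Z)\to \mathscr C(Y,Z)\otimes \mathscr C(X,Y)$, $\epsilon_X:\mathscr C(X,X)\to K$. ${^\mathscr C}Ctr$ is the category of left $\mathscr C$-contramodules: families of vector spaces $\mathcal M(X)$ with maps $\pi_{XY}:(\mathscr C(X,Y),\mathcal M(Y))\to\mathcal M(X)$ satisfying $\pi_{XZ}\circ(\delta_{XYZ},\mathcal M(Z))=\pi_{XY}\circ(\mathscr C(X,Y),\pi_{YZ})$ (via the hom-tensor identification) and $\pi_{XX}\circ(\epsilon_X,\mathcal M(X))=id$; morphisms are families of linear maps compatible with the $\pi$'s. It is abelian with kernels and cokernels computed objectwise. $\mathcal H_X^*$ denotes the contramodule $Y\mapsto (\mathscr C(Y,X),K)$ with structure maps induced by $(\delta_{YZX},K)$. *)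

theory Defs
  imports Complex_Main "HOL-Library.Function_Algebras"
begin

text \<open>
Coalgebra with several objects, presented by bases:
the objects are the elements of the type 'o; the vector space C(X,Y) is the
free K-vector space on the basis set Bas X Y.  The comultiplication
delta_XYZ : C(X,Z) -> C(Y,Z) (x) C(X,Y) is given by structure constants:
delta_XYZ(e_c) = sum over (a,b) of d X Y Z c a b . e_a (x) e_b
(a in Bas Y Z, b in Bas X Y), and the counit by eps X c = epsilon_X(e_c).
\<close>

definition dsupp :: "('o \<Rightarrow> 'o \<Rightarrow> 'b set) \<Rightarrow> ('o \<Rightarrow> 'o \<Rightarrow> 'o \<Rightarrow> 'b \<Rightarrow> 'b \<Rightarrow> 'b \<Rightarrow> 'k::zero)
     \<Rightarrow> 'o \<Rightarrow> 'o \<Rightarrow> 'o \<Rightarrow> 'b \<Rightarrow> ('b \<times> 'b) set" where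
  "dsupp Bas d X Y Z c = {(a, b). a \<in> Bas Y Z \<and> b \<in> Bas X Y \<and> d X Y Z c a b \<noteq> 0}"

definition coalg :: "('o \<Rightarrow> 'o \<Rightarrow> 'b set) \<Rightarrow> ('o \<Rightarrow> 'o \<Rightarrow> 'o \<Rightarrow> 'b \<Rightarrow> 'b \<Rightarrow> 'b \<Rightarrow> 'k::field)
     \<Rightarrow> ('o \<Rightarrow> 'b \<Rightarrow> 'k) \<Rightarrow> bool" where
  "coalg Bas d eps \<longleftrightarrow>
     (\<forall>X Y Z c. c \<in> Bas X Z \<longrightarrow> finite (dsupp Bas d X Y Z c)) \<and>
     (\<forall>W X Y Z c a b e. c \<in> Bas W Z \<longrightarrow> a \<in> Bas Y Z \<longrightarrow> b \<in> Bas X Y \<longrightarrow> e \<in> Bas W X \<longrightarrow>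
        (\<Sum>u\<in>{u \<in> Bas X Z. d W X Z c u e \<noteq> 0}. d W X Z c u e * d X Y Z u a b)
      = (\<Sum>v\<in>{v \<in> Bas W Y. d W Y Z c a v \<noteq> 0}. d W Y Z c a v * d W X Y v b e)) \<and>
     (\<forall>X Z c b. c \<in> Bas X Z \<longrightarrow> b \<in> Bas X Z \<longrightarrow>
        (\<Sum>a\<in>{a \<in> Bas Z Z. d X Z Z c a b \<noteq> 0}. eps Z a * d X Z Z c a b) = (if b = c then 1 else 0)) \<and>
     (\<forall>X Z c a. c \<in> Bas X Z \<longrightarrow> a \<in> Bas X Z \<longrightarrow>
        (\<Sum>b\<in>{b \<in> Bas X X. d X X Z c a b \<noteq> 0}. d X X Z c a b * eps X b) = (if a = c then 1 else 0))"

text \<open>Hom_K(C(X,Y), A): linear maps on the free space = functions on the basis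
(represented as functions that vanish off the basis).\<close>
definition HomB :: "('o \<Rightarrow> 'o \<Rightarrow> 'b set) \<Rightarrow> 'o \<Rightarrow> 'o \<Rightarrow> 'm::zero set \<Rightarrow> ('b \<Rightarrow> 'm) set" where
  "HomB Bas X Y A = {g. (\<forall>c\<in>Bas X Y. g c \<in> A) \<and> (\<forall>c. c \<notin> Bas X Y \<longrightarrow> g c = 0)}"

text \<open>Left C-contramodule: vector spaces M X (subspaces of an ambient K-vector space
with scalar multiplication sM), and linear maps pi X Y : Hom(C(X,Y), M Y) -> M X.\<close>
definition contramod :: "('o \<Rightarrow> 'o \<Rightarrow> 'b set) \<Rightarrow> ('o \<Rightarrow> 'o \<Rightarrow> 'o \<Rightarrow> 'b \<Rightarrow> 'b \<Rightarrow> 'b \<Rightarrow> 'k::field)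
     \<Rightarrow> ('o \<Rightarrow> 'b \<Rightarrow> 'k) \<Rightarrow> ('k \<Rightarrow> 'm::ab_group_add \<Rightarrow> 'm) \<Rightarrow> ('o \<Rightarrow> 'm set)
     \<Rightarrow> ('o \<Rightarrow> 'o \<Rightarrow> ('b \<Rightarrow> 'm) \<Rightarrow> 'm) \<Rightarrow> bool" where
  "contramod Bas d eps sM M p \<longleftrightarrow>
     vector_space sM \<and>
     (\<forall>X. module.subspace sM (M X)) \<and>
     (\<forall>X Y. \<forall>g\<in>HomB Bas X Y (M Y). p X Y g \<in> M X) \<and>
     (\<forall>X Y. \<forall>g\<in>HomB Bas X Y (M Y). \<forall>h\<in>HomB Bas X Y (M Y).
         p X Y (\<lambda>c. g c + h c) = p X Y g + p X Y h) \<and>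
     (\<forall>X Y k. \<forall>g\<in>HomB Bas X Y (M Y). p X Y (\<lambda>c. sM k (g c)) = sM k (p X Y g)) \<and>
     (\<forall>X Y Z (\<phi> :: 'b \<Rightarrow> 'b \<Rightarrow> 'm).
         (\<forall>a\<in>Bas Y Z. \<forall>b\<in>Bas X Y. \<phi> a b \<in> M Z) \<longrightarrow>
         p X Z (\<lambda>c. if c \<in> Bas X Z
                      then (\<Sum>(a, b)\<in>dsupp Bas d X Y Z c. sM (d X Y Z c a b) (\<phi> a b))
                      else 0)
       = p X Y (\<lambda>b. if b \<in> Bas X Y
                      then p Y Z (\<lambda>a. if a \<in> Bas Y Z then \<phi> a b else 0)
                      else 0)) \<and>
     (\<forall>X. \<forall>m\<in>M X. p X X (\<lambda>c. if c \<in> Bas X X then sM (eps X c) m else 0) = m)"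

definition cmor :: "('o \<Rightarrow> 'o \<Rightarrow> 'b set)
     \<Rightarrow> ('k \<Rightarrow> 'm::ab_group_add \<Rightarrow> 'm) \<Rightarrow> ('o \<Rightarrow> 'm set) \<Rightarrow> ('o \<Rightarrow> 'o \<Rightarrow> ('b \<Rightarrow> 'm) \<Rightarrow> 'm)
     \<Rightarrow> ('k \<Rightarrow> 'n::ab_group_add \<Rightarrow> 'n) \<Rightarrow> ('o \<Rightarrow> 'n set) \<Rightarrow> ('o \<Rightarrow> 'o \<Rightarrow> ('b \<Rightarrow> 'n) \<Rightarrow> 'n)
     \<Rightarrow> ('o \<Rightarrow> 'm \<Rightarrow> 'n) \<Rightarrow> bool" where
  "cmor Bas sM M p sN N q f \<longleftrightarrow>
     (\<forall>X. \<forall>x\<in>M X. f X x \<in> N X) \<and>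
     (\<forall>X. \<forall>x\<in>M X. \<forall>y\<in>M X. f X (x + y) = f X x + f X y) \<and>
     (\<forall>X k. \<forall>x\<in>M X. f X (sM k x) = sN k (f X x)) \<and>
     (\<forall>X Y. \<forall>g\<in>HomB Bas X Y (M Y).
        f X (p X Y g) = q X Y (\<lambda>c. if c \<in> Bas X Y then f Y (g c) else 0))"

text \<open>The contramodule H_X^* : Y |-> Hom_K(C(Y,X), K), with structure maps induced by
(delta_YZX, K).  Elements of Hom_K(C(Y,X),K) are functions on Bas Y X (zero elsewhere).\<close>
definition dscale :: "'k::field \<Rightarrow> ('b \<Rightarrow> 'k) \<Rightarrow> ('b \<Rightarrow> 'k)" where
  "dscale k f = (\<lambda>b. k * f b)"

definition Hdual :: "('o \<Rightarrow> 'o \<Rightarrow> 'b set) \<Rightarrow> 'o \<Rightarrow> 'o \<Rightarrow> ('b \<Rightarrow> 'k::field) set" where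
  "Hdual Bas X Y = {f. \<forall>b. b \<notin> Bas Y X \<longrightarrow> f b = 0}"

definition Hpi :: "('o \<Rightarrow> 'o \<Rightarrow> 'b set) \<Rightarrow> ('o \<Rightarrow> 'o \<Rightarrow> 'o \<Rightarrow> 'b \<Rightarrow> 'b \<Rightarrow> 'b \<Rightarrow> 'k::field)
     \<Rightarrow> 'o \<Rightarrow> 'o \<Rightarrow> 'o \<Rightarrow> ('b \<Rightarrow> ('b \<Rightarrow> 'k)) \<Rightarrow> ('b \<Rightarrow> 'k)" where
  "Hpi Bas d X Y Z g = (\<lambda>c. if c \<in> Bas Y X
       then (\<Sum>(a, b)\<in>dsupp Bas d Y Z X c. d Y Z X c a b * g b a) else 0)"

end

theory Submission
  imports Defs
begin

text \<open>
  \<open>H\<^sub>X\<^sup>*\<close> represents evaluation at \<open>X\<close>: every \<open>m \<in> M(X)\<close> induces the morphism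
  \<open>\<phi> \<mapsto> \<pi>(\<phi> \<cdot> m)\<close> from \<open>H\<^sub>X\<^sup>*\<close> to \<open>M\<close>, which sends the counit \<open>\<epsilon>\<^sub>X\<close> to \<open>m\<close>; conversely,
  since \<open>\<phi> = \<pi>(\<phi> \<cdot> \<epsilon>\<^sub>X)\<close>, every morphism \<open>f\<close> out of \<open>H\<^sub>X\<^sup>*\<close> is the one induced by
  \<open>f(\<epsilon>\<^sub>X)\<close>. Projectivity follows by lifting \<open>f(\<epsilon>\<^sub>X)\<close> along the epimorphism, and the
  family generates because \<open>x \<in> M(Y)\<close> is the image of \<open>\<epsilon>\<^sub>Y\<close> under the morphism induced
  by \<open>x\<close>. That \<open>H\<^sub>X\<^sup>*\<close> is a contramodule at all is the dual of coassociativity and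
  counitality, checked coefficientwise on finite supports.
\<close>

lemma sum_apply: "(sum f A) x = (\<Sum>a\<in>A. f a x)"
  by (induct A rule: infinite_finite_induct) auto

lemma subset_Field_times_Field: "P \<subseteq> S \<Longrightarrow> P \<subseteq> Field S \<times> Field S"
  by (auto intro: FieldI1 FieldI2)

lemma sum_reassoc_left:
  "(\<Sum>u\<in>U. \<Sum>c\<in>C. p u c * (\<Sum>a\<in>A. \<Sum>b\<in>B. q c a b * r a b u))
     = (\<Sum>u\<in>U. \<Sum>a\<in>A. \<Sum>b\<in>B. (\<Sum>c\<in>C. p u c * q c a b) * (r a b u :: 'a::comm_semiring_0))"
  by (simp add: sum_distrib_left sum_distrib_right mult.assoc sum.swap[where A = C])

lemma sum_reassoc_right:
  "(\<Sum>v\<in>V. \<Sum>b\<in>B. p v b * (\<Sum>u\<in>U. \<Sum>a\<in>A. q v u a * r a b u))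
     = (\<Sum>u\<in>U. \<Sum>a\<in>A. \<Sum>b\<in>B. (\<Sum>v\<in>V. p v b * q v u a) * (r a b u :: 'a::comm_semiring_0))"
  by (simp add: sum_distrib_left sum_distrib_right mult.assoc sum.swap[where A = V],
      simp add: sum.swap[where A = B])

lemma dsupp_subset: "dsupp Bas d X Y Z c \<subseteq> Bas Y Z \<times> Bas X Y"
  by (auto simp: dsupp_def)

lemma coalg_dsupp_finite: "coalg Bas d eps \<Longrightarrow> c \<in> Bas X Z \<Longrightarrow> finite (dsupp Bas d X Y Z c)"
  unfolding coalg_def by blast

lemma sum_dsupp_eq_sum_sum:
  fixes d :: "'o \<Rightarrow> 'o \<Rightarrow> 'o \<Rightarrow> 'b \<Rightarrow> 'b \<Rightarrow> 'b \<Rightarrow> 'k::field"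
  assumes "finite S" and "dsupp Bas d X Y Z c \<subseteq> S \<times> S"
  shows "(\<Sum>(a, b)\<in>dsupp Bas d X Y Z c. d X Y Z c a b * F a b)
       = (\<Sum>a\<in>S \<inter> Bas Y Z. \<Sum>b\<in>S \<inter> Bas X Y. d X Y Z c a b * F a b)"
proof -
  have "(\<Sum>(a, b)\<in>dsupp Bas d X Y Z c. d X Y Z c a b * F a b)
      = (\<Sum>(a, b)\<in>(S \<inter> Bas Y Z) \<times> (S \<inter> Bas X Y). d X Y Z c a b * F a b)"
    using assms by (intro sum.mono_neutral_left) (auto simp: dsupp_def)
  then show ?thesis
    by (simp add: sum.cartesian_product)
qed

lemma coalg_finite_support:
  assumes "coalg Bas d eps" and "c \<in> Bas X Z"
  obtains S where "finite S" "c \<in> S" "dsupp Bas d X Y Z c \<subseteq> S \<times> S"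
proof
  show "finite (insert c (Field (dsupp Bas d X Y Z c)))"
    using coalg_dsupp_finite[OF assms] by (simp add: finite_Field)
qed (auto intro: FieldI1 FieldI2)

lemma coalg_common_finite_support:
  assumes co: "coalg Bas d eps" and w: "w \<in> Bas X Q"
  obtains S where "finite S"
    and "dsupp Bas d X Z Q w \<subseteq> S \<times> S" "dsupp Bas d X Y Q w \<subseteq> S \<times> S"
    and "\<And>u c. (u, c) \<in> dsupp Bas d X Z Q w \<Longrightarrow> dsupp Bas d X Y Z c \<subseteq> S \<times> S"
    and "\<And>v b. (v, b) \<in> dsupp Bas d X Y Q w \<Longrightarrow> dsupp Bas d Y Z Q v \<subseteq> S \<times> S"
proof -
  let ?P = "dsupp Bas d X Z Q w \<union> dsupp Bas d X Y Q w
    \<union> (\<Union>c\<in>snd ` dsupp Bas d X Z Q w. dsupp Bas d X Y Z c)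
    \<union> (\<Union>v\<in>fst ` dsupp Bas d X Y Q w. dsupp Bas d Y Z Q v)"
  have "finite ?P"
    using coalg_dsupp_finite[OF co w]
    by (auto intro!: coalg_dsupp_finite[OF co] dest: subsetD[OF dsupp_subset])
  then have "finite (Field ?P)"
    by (simp only: finite_Field)
  then show thesis
  proof (rule that; intro subset_Field_times_Field)
    show "dsupp Bas d X Y Z c \<subseteq> ?P" if "(u, c) \<in> dsupp Bas d X Z Q w" for u c
      using that by (auto intro: rev_image_eqI)
    show "dsupp Bas d Y Z Q v \<subseteq> ?P" if "(v, b) \<in> dsupp Bas d X Y Q w" for v b
      using that by (auto intro: rev_image_eqI)
  qed auto
qed

lemma coalg_coassoc_sum:
  assumes co: "coalg Bas d eps"
    and "c \<in> Bas W Z" "a \<in> Bas Y Z" "b \<in> Bas X Y" "e \<in> Bas W X"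
    and S: "finite S" "dsupp Bas d W X Z c \<subseteq> S \<times> S" "dsupp Bas d W Y Z c \<subseteq> S \<times> S"
  shows "(\<Sum>u\<in>S \<inter> Bas X Z. d W X Z c u e * d X Y Z u a b)
       = (\<Sum>v\<in>S \<inter> Bas W Y. d W Y Z c a v * d W X Y v b e)"
proof -
  have "(\<Sum>u\<in>S \<inter> Bas X Z. d W X Z c u e * d X Y Z u a b)
      = (\<Sum>u\<in>{u \<in> Bas X Z. d W X Z c u e \<noteq> 0}. d W X Z c u e * d X Y Z u a b)"
    using S \<open>e \<in> Bas W X\<close> by (intro sum.mono_neutral_right) (auto simp: dsupp_def)
  also have "\<dots> = (\<Sum>v\<in>{v \<in> Bas W Y. d W Y Z c a v \<noteq> 0}. d W Y Z c a v * d W X Y v b e)"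
    using co assms(2-5) unfolding coalg_def by blast
  also have "\<dots> = (\<Sum>v\<in>S \<inter> Bas W Y. d W Y Z c a v * d W X Y v b e)"
    using S \<open>a \<in> Bas Y Z\<close> by (intro sum.mono_neutral_left) (auto simp: dsupp_def)
  finally show ?thesis .
qed

lemma coalg_counit_left_sum:
  assumes co: "coalg Bas d eps" and "c \<in> Bas X Z" "b \<in> Bas X Z"
    and S: "finite S" "dsupp Bas d X Z Z c \<subseteq> S \<times> S"
  shows "(\<Sum>a\<in>S \<inter> Bas Z Z. eps Z a * d X Z Z c a b) = (if b = c then 1 else 0)"
proof -
  have "(\<Sum>a\<in>S \<inter> Bas Z Z. eps Z a * d X Z Z c a b)
      = (\<Sum>a\<in>{a \<in> Bas Z Z. d X Z Z c a b \<noteq> 0}. eps Z a * d X Z Z c a b)"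
    using S \<open>b \<in> Bas X Z\<close> by (intro sum.mono_neutral_right) (auto simp: dsupp_def)
  then show ?thesis
    using co assms(2,3) unfolding coalg_def by simp
qed

lemma coalg_counit_right_sum:
  assumes co: "coalg Bas d eps" and "c \<in> Bas X Z" "a \<in> Bas X Z"
    and S: "finite S" "dsupp Bas d X X Z c \<subseteq> S \<times> S"
  shows "(\<Sum>b\<in>S \<inter> Bas X X. d X X Z c a b * eps X b) = (if a = c then 1 else 0)"
proof -
  have "(\<Sum>b\<in>S \<inter> Bas X X. d X X Z c a b * eps X b)
      = (\<Sum>b\<in>{b \<in> Bas X X. d X X Z c a b \<noteq> 0}. d X X Z c a b * eps X b)"
    using S \<open>a \<in> Bas X Z\<close> by (intro sum.mono_neutral_right) (auto simp: dsupp_def)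
  then show ?thesis
    using co assms(2,3) unfolding coalg_def by simp
qed

lemma Hpi_eq_sum_sum:
  fixes d :: "'o \<Rightarrow> 'o \<Rightarrow> 'o \<Rightarrow> 'b \<Rightarrow> 'b \<Rightarrow> 'b \<Rightarrow> 'k::field"
  assumes "w \<in> Bas Y X" and "finite S" and "dsupp Bas d Y Z X w \<subseteq> S \<times> S"
  shows "Hpi Bas d X Y Z g w = (\<Sum>a\<in>S \<inter> Bas Z X. \<Sum>b\<in>S \<inter> Bas Y Z. d Y Z X w a b * g b a)"
  using assms(1) sum_dsupp_eq_sum_sum[OF assms(2,3), of "\<lambda>a b. g b a"] by (simp add: Hpi_def)

lemma Hpi_assoc_at:
  fixes d :: "'o \<Rightarrow> 'o \<Rightarrow> 'o \<Rightarrow> 'b \<Rightarrow> 'b \<Rightarrow> 'b \<Rightarrow> 'k::field"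
  assumes co: "coalg Bas d eps" and w: "w \<in> Bas X Q"
  shows "Hpi Bas d Q X Z (\<lambda>c. if c \<in> Bas X Z
            then \<Sum>(a, b)\<in>dsupp Bas d X Y Z c. dscale (d X Y Z c a b) (\<phi> a b) else 0) w
       = Hpi Bas d Q X Y (\<lambda>b. if b \<in> Bas X Y
            then Hpi Bas d Q Y Z (\<lambda>a. if a \<in> Bas Y Z then \<phi> a b else 0) else 0) w"
proof -
  obtain S where S: "finite S"
    and Sw: "dsupp Bas d X Z Q w \<subseteq> S \<times> S" "dsupp Bas d X Y Q w \<subseteq> S \<times> S"
    and Sc: "\<And>u c. (u, c) \<in> dsupp Bas d X Z Q w \<Longrightarrow> dsupp Bas d X Y Z c \<subseteq> S \<times> S"
    and Sv: "\<And>v b. (v, b) \<in> dsupp Bas d X Y Q w \<Longrightarrow> dsupp Bas d Y Z Q v \<subseteq> S \<times> S"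
    using coalg_common_finite_support[OF co w] by blast
  let ?U = "S \<inter> Bas Z Q" and ?A = "S \<inter> Bas Y Z" and ?B = "S \<inter> Bas X Y"
  have inner: "(\<Sum>(a, b)\<in>dsupp Bas d X Y Z c. dscale (d X Y Z c a b) (\<phi> a b)) u
      = (\<Sum>a\<in>?A. \<Sum>b\<in>?B. d X Y Z c a b * \<phi> a b u)"
    if "(u, c) \<in> dsupp Bas d X Z Q w" for u c
    using sum_dsupp_eq_sum_sum[OF S Sc[OF that], of "\<lambda>a b. \<phi> a b u"]
    by (simp add: sum_apply dscale_def split_def)
  have outer: "Hpi Bas d Q Y Z (\<lambda>a. if a \<in> Bas Y Z then \<phi> a b else 0) v
      = (\<Sum>u\<in>?U. \<Sum>a\<in>?A. d Y Z Q v u a * \<phi> a b u)"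
    if "(v, b) \<in> dsupp Bas d X Y Q w" for v b
  proof -
    have v: "v \<in> Bas Y Q"
      using that by (simp add: dsupp_def)
    show ?thesis
      unfolding Hpi_eq_sum_sum[OF v S Sv[OF that]] by (intro sum.cong refl) auto
  qed
  have "Hpi Bas d Q X Z (\<lambda>c. if c \<in> Bas X Z
            then \<Sum>(a, b)\<in>dsupp Bas d X Y Z c. dscale (d X Y Z c a b) (\<phi> a b) else 0) w
      = (\<Sum>(u, c)\<in>dsupp Bas d X Z Q w. d X Z Q w u c *
           (\<Sum>a\<in>?A. \<Sum>b\<in>?B. d X Y Z c a b * \<phi> a b u))"
    using w dsupp_subset[of Bas d X Z Q w] by (auto simp: Hpi_def inner intro!: sum.cong)
  also have "\<dots> = (\<Sum>u\<in>?U. \<Sum>a\<in>?A. \<Sum>b\<in>?B.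
           (\<Sum>c\<in>S \<inter> Bas X Z. d X Z Q w u c * d X Y Z c a b) * \<phi> a b u)"
    by (simp add: sum_dsupp_eq_sum_sum[OF S Sw(1)] sum_reassoc_left)
  also have "\<dots> = (\<Sum>u\<in>?U. \<Sum>a\<in>?A. \<Sum>b\<in>?B.
           (\<Sum>v\<in>S \<inter> Bas Y Q. d X Y Q w v b * d Y Z Q v u a) * \<phi> a b u)"
    using coalg_coassoc_sum[OF co w _ _ _ S Sw(2,1)] by (intro sum.cong refl) auto
  also have "\<dots> = (\<Sum>(v, b)\<in>dsupp Bas d X Y Q w. d X Y Q w v b *
           (\<Sum>u\<in>?U. \<Sum>a\<in>?A. d Y Z Q v u a * \<phi> a b u))"
    by (simp add: sum_dsupp_eq_sum_sum[OF S Sw(2)] sum_reassoc_right)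
  also have "\<dots> = Hpi Bas d Q X Y (\<lambda>b. if b \<in> Bas X Y
            then Hpi Bas d Q Y Z (\<lambda>a. if a \<in> Bas Y Z then \<phi> a b else 0) else 0) w"
    using w dsupp_subset[of Bas d X Y Q w] unfolding Hpi_def[of Bas d Q X Y]
    by (auto simp: outer intro!: sum.cong)
  finally show ?thesis .
qed

definition counit_dual :: "('o \<Rightarrow> 'o \<Rightarrow> 'b set) \<Rightarrow> ('o \<Rightarrow> 'b \<Rightarrow> 'k) \<Rightarrow> 'o \<Rightarrow> 'b \<Rightarrow> 'k::zero" where
  "counit_dual Bas eps X = (\<lambda>c. if c \<in> Bas X X then eps X c else 0)"

lemma counit_dual_in_Hdual: "counit_dual Bas eps X \<in> Hdual Bas X X"
  by (simp add: counit_dual_def Hdual_def)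

lemma Hpi_counit:
  fixes d :: "'o \<Rightarrow> 'o \<Rightarrow> 'o \<Rightarrow> 'b \<Rightarrow> 'b \<Rightarrow> 'b \<Rightarrow> 'k::field"
  assumes co: "coalg Bas d eps" and m: "m \<in> Hdual Bas Q X"
  shows "Hpi Bas d Q X X (\<lambda>c. if c \<in> Bas X X then dscale (eps X c) m else 0) = m"
proof
  fix w
  show "Hpi Bas d Q X X (\<lambda>c. if c \<in> Bas X X then dscale (eps X c) m else 0) w = m w"
  proof (cases "w \<in> Bas X Q")
    case False
    then show ?thesis
      using m by (simp add: Hpi_def Hdual_def)
  next
    case w: True
    obtain S where S: "finite S" "w \<in> S" "dsupp Bas d X X Q w \<subseteq> S \<times> S"
      using coalg_finite_support[OF co w] .
    have "Hpi Bas d Q X X (\<lambda>c. if c \<in> Bas X X then dscale (eps X c) m else 0) w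
        = (\<Sum>a\<in>S \<inter> Bas X Q. \<Sum>b\<in>S \<inter> Bas X X. d X X Q w a b * (eps X b * m a))"
      unfolding Hpi_eq_sum_sum[OF w S(1,3)] by (intro sum.cong refl) (simp add: dscale_def)
    also have "\<dots> = (\<Sum>a\<in>S \<inter> Bas X Q. m a * (\<Sum>b\<in>S \<inter> Bas X X. d X X Q w a b * eps X b))"
      by (simp add: sum_distrib_left mult_ac)
    also have "\<dots> = (\<Sum>a\<in>S \<inter> Bas X Q. if a = w then m a else 0)"
      using coalg_counit_right_sum[OF co w _ S(1,3)] by (intro sum.cong refl) auto
    also have "\<dots> = m w"
      using S w by simp
    finally show ?thesis .
  qed
qed

lemma Hpi_counit_expansion:
  fixes d :: "'o \<Rightarrow> 'o \<Rightarrow> 'o \<Rightarrow> 'b \<Rightarrow> 'b \<Rightarrow> 'b \<Rightarrow> 'k::field"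
  assumes co: "coalg Bas d eps" and \<phi>: "\<phi> \<in> Hdual Bas X Y"
  shows "Hpi Bas d X Y X (\<lambda>c. if c \<in> Bas Y X then dscale (\<phi> c) (counit_dual Bas eps X) else 0) = \<phi>"
proof
  fix w
  show "Hpi Bas d X Y X (\<lambda>c. if c \<in> Bas Y X then dscale (\<phi> c) (counit_dual Bas eps X) else 0) w = \<phi> w"
  proof (cases "w \<in> Bas Y X")
    case False
    then show ?thesis
      using \<phi> by (simp add: Hpi_def Hdual_def)
  next
    case w: True
    obtain S where S: "finite S" "w \<in> S" "dsupp Bas d Y X X w \<subseteq> S \<times> S"
      using coalg_finite_support[OF co w] .
    have "Hpi Bas d X Y X (\<lambda>c. if c \<in> Bas Y X then dscale (\<phi> c) (counit_dual Bas eps X) else 0) w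
        = (\<Sum>a\<in>S \<inter> Bas X X. \<Sum>b\<in>S \<inter> Bas Y X. d Y X X w a b * (\<phi> b * eps X a))"
      unfolding Hpi_eq_sum_sum[OF w S(1,3)]
      by (intro sum.cong refl) (simp add: dscale_def counit_dual_def)
    also have "\<dots> = (\<Sum>b\<in>S \<inter> Bas Y X. \<phi> b * (\<Sum>a\<in>S \<inter> Bas X X. eps X a * d Y X X w a b))"
      by (subst sum.swap) (simp add: sum_distrib_left mult_ac)
    also have "\<dots> = (\<Sum>b\<in>S \<inter> Bas Y X. if b = w then \<phi> b else 0)"
      using coalg_counit_left_sum[OF co w _ S(1,3)] by (intro sum.cong refl) auto
    also have "\<dots> = \<phi> w"
      using S w by simp
    finally show ?thesis .
  qed
qed

lemma Hdual_contramod: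
  fixes d :: "'o \<Rightarrow> 'o \<Rightarrow> 'o \<Rightarrow> 'b \<Rightarrow> 'b \<Rightarrow> 'b \<Rightarrow> 'k::field"
  assumes co: "coalg Bas d eps"
  shows "contramod Bas d eps dscale (Hdual Bas Q) (Hpi Bas d Q)"
proof -
  have md: "module (dscale :: 'k \<Rightarrow> ('b \<Rightarrow> 'k) \<Rightarrow> _)"
    by unfold_locales (auto simp: dscale_def fun_eq_iff algebra_simps)
  have "module.subspace (dscale :: 'k \<Rightarrow> _) (Hdual Bas Q X)" for X
    unfolding module.subspace_def[OF md] by (simp add: Hdual_def dscale_def)
  moreover have "Hpi Bas d Q X Y (\<lambda>c. g c + h c) = Hpi Bas d Q X Y g + Hpi Bas d Q X Y h" for X Y g h
    by (auto simp: Hpi_def fun_eq_iff algebra_simps sum.distrib split_def)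
  moreover have "Hpi Bas d Q X Y (\<lambda>c. dscale k (g c)) = dscale k (Hpi Bas d Q X Y g)" for X Y k g
    by (auto simp: Hpi_def fun_eq_iff dscale_def sum_distrib_left split_def mult_ac)
  moreover have "Hpi Bas d Q X Y g \<in> Hdual Bas Q X" for X Y g
    by (simp add: Hdual_def Hpi_def)
  ultimately show ?thesis
    using md Hpi_assoc_at[OF co] Hpi_counit[OF co]
    unfolding contramod_def module_iff_vector_space by (auto simp: fun_eq_iff Hpi_def)
qed

definition yoneda_mor :: "('o \<Rightarrow> 'o \<Rightarrow> 'b set) \<Rightarrow> ('k \<Rightarrow> 'm \<Rightarrow> 'm) \<Rightarrow> ('o \<Rightarrow> 'o \<Rightarrow> ('b \<Rightarrow> 'm) \<Rightarrow> 'm)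
    \<Rightarrow> 'o \<Rightarrow> 'm::zero \<Rightarrow> 'o \<Rightarrow> ('b \<Rightarrow> 'k) \<Rightarrow> 'm" where
  "yoneda_mor Bas sM p X m Y \<phi> = p Y X (\<lambda>c. if c \<in> Bas Y X then sM (\<phi> c) m else 0)"

lemma contramod_module: "contramod Bas d eps sM M p \<Longrightarrow> module sM"
  unfolding contramod_def module_iff_vector_space by blast

lemma contramod_scale_mem:
  assumes "contramod Bas d eps sM M p" and "m \<in> M X"
  shows "sM k m \<in> M X"
proof -
  have "module.subspace sM (M X)"
    using assms(1) unfolding contramod_def by blast
  then show ?thesis
    by (rule module.subspace_scale[OF contramod_module[OF assms(1)] _ assms(2)])
qed

lemma yoneda_mor_arg_HomB:
  assumes "contramod Bas d eps sM M p" and "m \<in> M X"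
  shows "(\<lambda>c. if c \<in> Bas Y X then sM (\<phi> c) m else 0) \<in> HomB Bas Y X (M X)"
  using contramod_scale_mem[OF assms] by (simp add: HomB_def)

lemma yoneda_mor_Hpi:
  assumes cm: "contramod Bas d eps sM M p" and m: "m \<in> M X"
  shows "yoneda_mor Bas sM p X m Y (Hpi Bas d X Y Z g)
       = p Y Z (\<lambda>c. if c \<in> Bas Y Z then yoneda_mor Bas sM p X m Z (g c) else 0)"
proof -
  have md: "module sM"
    using contramod_module[OF cm] .
  have "(\<lambda>c. if c \<in> Bas Y X then sM (Hpi Bas d X Y Z g c) m else 0)
      = (\<lambda>c. if c \<in> Bas Y X
           then \<Sum>(a, b)\<in>dsupp Bas d Y Z X c. sM (d Y Z X c a b) (sM (g b a) m) else 0)"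
    by (auto simp: fun_eq_iff Hpi_def module.scale_sum_left[OF md] split_def
        module.scale_scale[OF md])
  then show ?thesis
    using cm contramod_scale_mem[OF cm m] unfolding yoneda_mor_def contramod_def by simp
qed

lemma yoneda_mor_cmor:
  assumes cm: "contramod Bas d eps sM M p" and m: "m \<in> M X"
  shows "cmor Bas dscale (Hdual Bas X) (Hpi Bas d X) sM M p (yoneda_mor Bas sM p X m)"
  unfolding cmor_def
proof (intro conjI allI ballI)
  have md: "module sM"
    using contramod_module[OF cm] .
  note arg = yoneda_mor_arg_HomB[OF cm m]
  have p: "\<And>Y g h. g \<in> HomB Bas Y X (M X) \<Longrightarrow> h \<in> HomB Bas Y X (M X) \<Longrightarrow>
              p Y X (\<lambda>c. g c + h c) = p Y X g + p Y X h"
    "\<And>Y k g. g \<in> HomB Bas Y X (M X) \<Longrightarrow> p Y X (\<lambda>c. sM k (g c)) = sM k (p Y X g)"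
    "\<And>Y g. g \<in> HomB Bas Y X (M X) \<Longrightarrow> p Y X g \<in> M Y"
    using cm unfolding contramod_def by blast+
  show "yoneda_mor Bas sM p X m Y \<phi> \<in> M Y" for Y \<phi>
    unfolding yoneda_mor_def by (rule p(3)[OF arg])
  show "yoneda_mor Bas sM p X m Y (\<phi> + \<psi>) = yoneda_mor Bas sM p X m Y \<phi> + yoneda_mor Bas sM p X m Y \<psi>"
    for Y \<phi> \<psi>
  proof -
    have "(\<lambda>c. if c \<in> Bas Y X then sM ((\<phi> + \<psi>) c) m else 0)
        = (\<lambda>c. (if c \<in> Bas Y X then sM (\<phi> c) m else 0) + (if c \<in> Bas Y X then sM (\<psi> c) m else 0))"
      by (simp add: fun_eq_iff module.scale_left_distrib[OF md])
    then show ?thesis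
      unfolding yoneda_mor_def using p(1)[OF arg arg] by simp
  qed
  show "yoneda_mor Bas sM p X m Y (dscale k \<phi>) = sM k (yoneda_mor Bas sM p X m Y \<phi>)" for Y k \<phi>
  proof -
    have "(\<lambda>c. if c \<in> Bas Y X then sM (dscale k \<phi> c) m else 0)
        = (\<lambda>c. sM k (if c \<in> Bas Y X then sM (\<phi> c) m else 0))"
      by (simp add: fun_eq_iff dscale_def module.scale_scale[OF md] module.scale_zero_right[OF md])
    then show ?thesis
      unfolding yoneda_mor_def using p(2)[OF arg] by simp
  qed
  show "yoneda_mor Bas sM p X m Y (Hpi Bas d X Y Z g)
      = p Y Z (\<lambda>c. if c \<in> Bas Y Z then yoneda_mor Bas sM p X m Z (g c) else 0)" for Y Z g
    by (rule yoneda_mor_Hpi[OF cm m])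
qed

lemma yoneda_mor_counit:
  assumes "contramod Bas d eps sM M p" and "m \<in> M X"
  shows "yoneda_mor Bas sM p X m X (counit_dual Bas eps X) = m"
  using assms unfolding contramod_def yoneda_mor_def counit_dual_def by (simp cong: if_cong)

lemma cmor_yoneda_mor:
  assumes cm: "contramod Bas d eps sM M pM" and e: "cmor Bas sM M pM sN N pN e" and m: "m \<in> M X"
  shows "e Y (yoneda_mor Bas sM pM X m Y \<phi>) = yoneda_mor Bas sN pN X (e X m) Y \<phi>"
  using e yoneda_mor_arg_HomB[OF cm m] contramod_scale_mem[OF cm m] m
  unfolding cmor_def yoneda_mor_def by (simp cong: if_cong)

lemma cmor_Hdual_eq_yoneda_mor:
  fixes d :: "'o \<Rightarrow> 'o \<Rightarrow> 'o \<Rightarrow> 'b \<Rightarrow> 'b \<Rightarrow> 'b \<Rightarrow> 'k::field"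
  assumes co: "coalg Bas d eps" and f: "cmor Bas dscale (Hdual Bas X) (Hpi Bas d X) sN N pN f"
    and \<phi>: "\<phi> \<in> Hdual Bas X Y"
  shows "f Y \<phi> = yoneda_mor Bas sN pN X (f X (counit_dual Bas eps X)) Y \<phi>"
proof -
  let ?\<epsilon> = "counit_dual Bas eps X"
  have arg: "(\<lambda>c. if c \<in> Bas Y X then dscale (\<phi> c) ?\<epsilon> else 0) \<in> HomB Bas Y X (Hdual Bas X X)"
    by (auto simp: HomB_def Hdual_def dscale_def counit_dual_def)
  have "f Y \<phi> = f Y (Hpi Bas d X Y X (\<lambda>c. if c \<in> Bas Y X then dscale (\<phi> c) ?\<epsilon> else 0))"
    using Hpi_counit_expansion[OF co \<phi>] by simp
  also have "\<dots> = pN Y X (\<lambda>c. if c \<in> Bas Y X then f X (dscale (\<phi> c) ?\<epsilon>) else 0)"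
    using f arg unfolding cmor_def by (simp cong: if_cong)
  also have "\<dots> = yoneda_mor Bas sN pN X (f X ?\<epsilon>) Y \<phi>"
  proof -
    have "f X (dscale k ?\<epsilon>) = sN k (f X ?\<epsilon>)" for k
      using f counit_dual_in_Hdual[of Bas eps X] unfolding cmor_def by blast
    then show ?thesis
      unfolding yoneda_mor_def by (simp cong: if_cong)
  qed
  finally show ?thesis .
qed

lemma Hdual_projective:
  fixes d :: "'o \<Rightarrow> 'o \<Rightarrow> 'o \<Rightarrow> 'b \<Rightarrow> 'b \<Rightarrow> 'b \<Rightarrow> 'k::field"
  assumes co: "coalg Bas d eps" and cM: "contramod Bas d eps sM M pM"
    and e: "cmor Bas sM M pM sN N pN e" and surj: "e X ` M X = N X"
    and f: "cmor Bas dscale (Hdual Bas X) (Hpi Bas d X) sN N pN f"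
  shows "\<exists>g. cmor Bas dscale (Hdual Bas X) (Hpi Bas d X) sM M pM g
           \<and> (\<forall>Y. \<forall>\<phi>\<in>Hdual Bas X Y. e Y (g Y \<phi>) = f Y \<phi>)"
proof -
  have "f X (counit_dual Bas eps X) \<in> N X"
    using f counit_dual_in_Hdual[of Bas eps X] unfolding cmor_def by blast
  then obtain m where m: "m \<in> M X" and em: "e X m = f X (counit_dual Bas eps X)"
    using surj by (metis imageE)
  have "e Y (yoneda_mor Bas sM pM X m Y \<phi>) = f Y \<phi>" if "\<phi> \<in> Hdual Bas X Y" for Y \<phi>
    using cmor_yoneda_mor[OF cM e m] cmor_Hdual_eq_yoneda_mor[OF co f that] em by simp
  with yoneda_mor_cmor[OF cM m] show ?thesis
    by blast
qed

lemma Hdual_separates: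
  assumes cM: "contramod Bas d eps sM M pM" and x: "x \<in> M Y" and ne: "f Y x \<noteq> g Y x"
  shows "\<exists>h. cmor Bas dscale (Hdual Bas Y) (Hpi Bas d Y) sM M pM h
           \<and> (\<exists>\<phi>\<in>Hdual Bas Y Y. f Y (h Y \<phi>) \<noteq> g Y (h Y \<phi>))"
proof -
  let ?h = "yoneda_mor Bas sM pM Y x"
  have "f Y (?h Y (counit_dual Bas eps Y)) \<noteq> g Y (?h Y (counit_dual Bas eps Y))"
    using ne by (simp add: yoneda_mor_counit[OF cM x])
  with yoneda_mor_cmor[OF cM x] counit_dual_in_Hdual[of Bas eps Y] show ?thesis
    by blast
qed

theorem proposition3p4:
  fixes Bas :: "'o \<Rightarrow> 'o \<Rightarrow> 'b set"
    and d :: "'o \<Rightarrow> 'o \<Rightarrow> 'o \<Rightarrow> 'b \<Rightarrow> 'b \<Rightarrow> 'b \<Rightarrow> 'k::field"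
    and eps :: "'o \<Rightarrow> 'b \<Rightarrow> 'k"
  assumes "coalg Bas d eps"
  shows "(\<forall>X. contramod Bas d eps dscale (Hdual Bas X) (Hpi Bas d X))
   \<and> (\<forall>X (sM :: 'k \<Rightarrow> 'm::ab_group_add \<Rightarrow> 'm) M pM (sN :: 'k \<Rightarrow> 'n::ab_group_add \<Rightarrow> 'n) N pN e f.
        contramod Bas d eps sM M pM \<and> contramod Bas d eps sN N pN
        \<and> cmor Bas sM M pM sN N pN e \<and> (\<forall>Y. e Y ` M Y = N Y)
        \<and> cmor Bas dscale (Hdual Bas X) (Hpi Bas d X) sN N pN f
        \<longrightarrow> (\<exists>g. cmor Bas dscale (Hdual Bas X) (Hpi Bas d X) sM M pM g
                 \<and> (\<forall>Y. \<forall>x\<in>Hdual Bas X Y. e Y (g Y x) = f Y x)))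
   \<and> (\<forall>(sM :: 'k \<Rightarrow> 'm \<Rightarrow> 'm) M pM (sN :: 'k \<Rightarrow> 'n \<Rightarrow> 'n) N pN f g.
        contramod Bas d eps sM M pM \<and> contramod Bas d eps sN N pN
        \<and> cmor Bas sM M pM sN N pN f \<and> cmor Bas sM M pM sN N pN g
        \<and> (\<exists>Y. \<exists>x\<in>M Y. f Y x \<noteq> g Y x)
        \<longrightarrow> (\<exists>X h. cmor Bas dscale (Hdual Bas X) (Hpi Bas d X) sM M pM h
                 \<and> (\<exists>Y. \<exists>x\<in>Hdual Bas X Y. f Y (h Y x) \<noteq> g Y (h Y x))))"
proof (intro conjI allI impI)
  show "contramod Bas d eps dscale (Hdual Bas X) (Hpi Bas d X)" for X
    by (rule Hdual_contramod[OF assms])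
next
  fix X and sM :: "'k \<Rightarrow> 'm::ab_group_add \<Rightarrow> 'm" and M pM
    and sN :: "'k \<Rightarrow> 'n::ab_group_add \<Rightarrow> 'n" and N pN e f
  assume "contramod Bas d eps sM M pM \<and> contramod Bas d eps sN N pN
        \<and> cmor Bas sM M pM sN N pN e \<and> (\<forall>Y. e Y ` M Y = N Y)
        \<and> cmor Bas dscale (Hdual Bas X) (Hpi Bas d X) sN N pN f"
  then show "\<exists>g. cmor Bas dscale (Hdual Bas X) (Hpi Bas d X) sM M pM g
           \<and> (\<forall>Y. \<forall>x\<in>Hdual Bas X Y. e Y (g Y x) = f Y x)"
    by (elim conjE) (rule Hdual_projective[OF assms], simp_all)
next
  fix sM :: "'k \<Rightarrow> 'm \<Rightarrow> 'm" and M pM and sN :: "'k \<Rightarrow> 'n \<Rightarrow> 'n" and N pN f g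
  assume "contramod Bas d eps sM M pM \<and> contramod Bas d eps sN N pN
        \<and> cmor Bas sM M pM sN N pN f \<and> cmor Bas sM M pM sN N pN g
        \<and> (\<exists>Y. \<exists>x\<in>M Y. f Y x \<noteq> g Y x)"
  then obtain Y x where cM: "contramod Bas d eps sM M pM" and x: "x \<in> M Y"
    and ne: "f Y x \<noteq> g Y x"
    by blast
  from Hdual_separates[OF cM x, where f = f and g = g, OF ne]
  show "\<exists>X h. cmor Bas dscale (Hdual Bas X) (Hpi Bas d X) sM M pM h
           \<and> (\<exists>Y. \<exists>x\<in>Hdual Bas X Y. f Y (h Y x) \<noteq> g Y (h Y x))"
    by blast
qed

end
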